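(* Let $\theta\geq0$ and $\lambda\in\mathbb{R}$. Let $W=\sum_{a\in\mathbb{Z}}e^{\theta|a-\lambda|}P_a$ (self-adjoint on its natural domain). Then $W^{-1}VW$, defined on finitely supported vectors in the Stark basis, has a bounded closure, and $\|\overline{W^{-1}VW}\|\le C(\theta)$ for a constant $C(\theta)<\infty$ depending on $\theta,N,g,h,v$ but not on $\lambda$.
   Context: $g,h\in\mathbb{R}$, $h\ne0$. $(e_j)$ canonical basis of $\ell^2(\mathbb{Z})$, $H_0=g\Delta-2hX$ with $Xe_j=je_j$, $\Delta e_j=-(e_{j-1}+e_{j+1})$. Stark basis: $|m\rangle\in\ell^2(\mathbb{Z})$, $m\in\mathbb{Z}$, with $\langle e_j|m\rangle=\mathcal{J}_{m-j}(g/h)$ (Bessel functions); it is an orthonormal basis with $H_0|m\rangle=-2hm|m\rangle$. For $\underline m\in\mathbb{Z}^N$, $|\underline m\rangle=|m_1\rangle\otimes\cdots\otimes|m_N\rangle$. $V=\sum_{1\le i<j\le N}V_{ij}$ with $V_{ij}$ multiplication by $v(x_i-x_j)$ in the position basis, $v:\mathbb{Z}\to\mathbb{R}$ bounded with $v(n)\to0$ at $\pm\infty$. $P_a$ is the orthogonal projection onto $\overline{\operatorname{span}}\{|\underline m\rangle:\sum_im_i=a\}$. *)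

theory Defs
  imports "HOL-Analysis.Analysis"
begin

definition besselJ_nat :: "nat \<Rightarrow> real \<Rightarrow> real" where
  "besselJ_nat n x = (\<Sum>k. (-1) ^ k / (fact k * fact (k + n)) * (x / 2) ^ (2 * k + n))"

definition besselJ :: "int \<Rightarrow> real \<Rightarrow> real" where
  "besselJ n x = (if 0 \<le> n then besselJ_nat (nat n) x
                  else (-1) ^ nat (- n) * besselJ_nat (nat (- n)) x)"

text \<open>Configurations of N particles on Z are functions 'n => int, with 'n a finite
  (linearly ordered) index type of cardinality N.  Vectors of l^2(Z^N) are
  functions ('n => int) => complex.\<close>

definition l2 :: "(('n::finite \<Rightarrow> int) \<Rightarrow> complex) \<Rightarrow> bool" where
  "l2 \<psi> \<longleftrightarrow> (\<lambda>x. (cmod (\<psi> x))\<^sup>2) summable_on UNIV"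

definition l2norm :: "(('n::finite \<Rightarrow> int) \<Rightarrow> complex) \<Rightarrow> real" where
  "l2norm \<psi> = sqrt (\<Sum>\<^sub>\<infinity>x. (cmod (\<psi> x))\<^sup>2)"

text \<open>Stark basis vector |m> (m in Z^N) in the position basis:
  <e_x | m> = prod_i J_{m_i - x_i}(g/h).\<close>
definition stark :: "real \<Rightarrow> real \<Rightarrow> ('n::finite \<Rightarrow> int) \<Rightarrow> ('n \<Rightarrow> int) \<Rightarrow> complex" where
  "stark g h m x = complex_of_real (\<Prod>i\<in>UNIV. besselJ (m i - x i) (g / h))"

definition stark_coeff :: "real \<Rightarrow> real \<Rightarrow> ('n::finite \<Rightarrow> int) \<Rightarrow> (('n \<Rightarrow> int) \<Rightarrow> complex) \<Rightarrow> complex" where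
  "stark_coeff g h m \<phi> = (\<Sum>\<^sub>\<infinity>x. cnj (stark g h m x) * \<phi> x)"

definition msum :: "('n::finite \<Rightarrow> int) \<Rightarrow> int" where
  "msum m = (\<Sum>i\<in>UNIV. m i)"

text \<open>P_a: orthogonal projection onto the closed span of {|m> : sum_i m_i = a}.\<close>
definition Pa :: "real \<Rightarrow> real \<Rightarrow> int \<Rightarrow> (('n::finite \<Rightarrow> int) \<Rightarrow> complex) \<Rightarrow> ('n \<Rightarrow> int) \<Rightarrow> complex" where
  "Pa g h a \<phi> x = (\<Sum>\<^sub>\<infinity>m\<in>{m. msum m = a}. stark_coeff g h m \<phi> * stark g h m x)"

text \<open>The operator sum_a w(a) P_a (applied pointwise).  W = sum_a e^{theta|a-lambda|} P_a,
  W^{-1} = sum_a e^{-theta|a-lambda|} P_a.\<close>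
definition Wop :: "real \<Rightarrow> real \<Rightarrow> (int \<Rightarrow> real) \<Rightarrow> (('n::finite \<Rightarrow> int) \<Rightarrow> complex) \<Rightarrow> ('n \<Rightarrow> int) \<Rightarrow> complex" where
  "Wop g h w \<phi> x = (\<Sum>\<^sub>\<infinity>a. complex_of_real (w a) * Pa g h a \<phi> x)"

definition Pot :: "(int \<Rightarrow> real) \<Rightarrow> ('n::{finite,linorder} \<Rightarrow> int) \<Rightarrow> real" where
  "Pot v x = (\<Sum>(i, j)\<in>{(i, j). i < j}. v (x i - x j))"

end

theory Submission
  imports Defs
begin

(* The Bessel bound |J_k(z)| <= (|z|/2)^|k| / |k|! * e^(z^2/4) shows that the Stark vectors, and hence
   both the coefficient map f |-> <m|f> and the operators sum_a w(a) P_a, are dominated by the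
   translation-invariant kernel G(d) = prod_i e^(2 theta |d_i|) (|z|/2)^|d_i| / |d_i|! * e^(z^2/4),
   which is summable over Z^N.  The weights e^(+-theta |a - lambda|) of W and W^-1 only ever meet as
   a ratio between a = sum_i m_i and b = sum_i y_i, bounded by e^(theta |a - b|) <= e^(theta sum_i |m_i - y_i|)
   uniformly in lambda, and this factor is absorbed into G.  Along the chain
   psi -> <m|psi> -> W psi -> V W psi -> <m|V W psi> -> W^-1 V W psi every link other than the
   multiplication by V is then an integral operator dominated by G, and the Schur test bounds it by
   the mass of G.  Divergent sums need no separate treatment: a divergent infsum is 0, so bounding
   an infinite sum by the nonnegative integral of the norms of its terms is always valid. *)

section \<open>A majorant for Bessel functions\<close>

definition bessel_majorant :: "real \<Rightarrow> int \<Rightarrow> real" where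
  "bessel_majorant z k = (\<bar>z\<bar> / 2) ^ nat \<bar>k\<bar> / fact (nat \<bar>k\<bar>) * exp (z\<^sup>2 / 4)"

lemma bessel_majorant_nonneg: "bessel_majorant z k \<ge> 0"
  unfolding bessel_majorant_def by simp

lemma exp_sums: "(\<lambda>n. (x::real) ^ n / fact n) sums exp x"
  using exp_converges[of x] by (simp add: divide_inverse mult.commute)

lemma abs_besselJ_nat_le: "\<bar>besselJ_nat n x\<bar> \<le> (\<bar>x\<bar> / 2) ^ n / fact n * exp (x\<^sup>2 / 4)"
proof -
  define t where "t k = (-1) ^ k / (fact k * fact (k + n)) * (x / 2) ^ (2 * k + n)" for k
  define b where "b k = (\<bar>x\<bar> / 2) ^ n / fact n * ((x\<^sup>2 / 4) ^ k / fact k)" for k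
  have b_sums: "b sums ((\<bar>x\<bar> / 2) ^ n / fact n * exp (x\<^sup>2 / 4))"
    unfolding b_def by (intro sums_mult exp_sums)
  have t_le_b: "\<bar>t k\<bar> \<le> b k" for k
  proof -
    have "\<bar>t k\<bar> = (\<bar>x\<bar> / 2) ^ (2 * k + n) / (fact k * fact (k + n))"
      unfolding t_def by (simp add: abs_mult power_abs)
    also have "\<dots> \<le> (\<bar>x\<bar> / 2) ^ (2 * k + n) / (fact k * fact n)"
      by (intro divide_left_mono mult_left_mono) (auto simp: fact_mono)
    also have "\<dots> = b k"
    proof -
      have "(\<bar>x\<bar> / 2) ^ (2 * k + n) = (x\<^sup>2 / 4) ^ k * (\<bar>x\<bar> / 2) ^ n"
        by (simp add: power_add power_mult power_divide)
      then show ?thesis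
        by (simp add: b_def mult.commute)
    qed
    finally show ?thesis .
  qed
  have "summable b"
    using b_sums by (rule sums_summable)
  then have "summable (\<lambda>k. \<bar>t k\<bar>)"
    by (rule summable_comparison_test') (simp add: t_le_b)
  then have "\<bar>besselJ_nat n x\<bar> \<le> (\<Sum>k. \<bar>t k\<bar>)"
    unfolding besselJ_nat_def t_def[symmetric] by (rule summable_rabs)
  also have "\<dots> \<le> suminf b"
    using t_le_b \<open>summable (\<lambda>k. \<bar>t k\<bar>)\<close> \<open>summable b\<close> by (rule suminf_le)
  finally show ?thesis
    using b_sums by (simp add: sums_iff)
qed

lemma abs_besselJ_le: "\<bar>besselJ k z\<bar> \<le> bessel_majorant z k"
  using abs_besselJ_nat_le[of "nat \<bar>k\<bar>" z]
  by (cases "0 \<le> k") (simp_all add: besselJ_def bessel_majorant_def abs_mult)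

section \<open>Nonnegative sums and the Schur test\<close>

lemma ennreal_infsum_eq_nn_integral:
  fixes f :: "'a \<Rightarrow> real"
  assumes "\<And>x. f x \<ge> 0" and "f summable_on A"
  shows "ennreal (infsum f A) = (\<integral>\<^sup>+x. ennreal (f x) \<partial>count_space A)"
proof -
  have "Infinite_Set_Sum.abs_summable_on f A"
    using assms abs_summable_equivalent[of f A] by simp
  then show ?thesis
    using assms(1) by (simp add: nn_integral_conv_infsetsum infsetsum_infsum)
qed

lemma summable_on_if_nn_integral_finite:
  fixes f :: "'a \<Rightarrow> real"
  assumes "\<And>x. f x \<ge> 0" and "(\<integral>\<^sup>+x. ennreal (f x) \<partial>count_space A) \<noteq> \<infinity>"
  shows "f summable_on A"
proof -
  have "integrable (count_space A) f"
    using assms by (intro integrableI_bounded) (auto simp: top.not_eq_extremum)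
  then have "(\<lambda>x. norm (f x)) summable_on A"
    using abs_summable_equivalent[of f A] by (simp add: abs_summable_on_def)
  then show ?thesis
    by (rule abs_summable_summable)
qed

lemma norm_infsum_le_nn_integral:
  fixes f :: "'a \<Rightarrow> complex"
  shows "ennreal (norm (infsum f A)) \<le> (\<integral>\<^sup>+x. ennreal (norm (f x)) \<partial>count_space A)"
proof (cases "(\<lambda>x. norm (f x)) summable_on A")
  case True
  then have "ennreal (norm (infsum f A)) \<le> ennreal (infsum (\<lambda>x. norm (f x)) A)"
    by (intro ennreal_leI norm_infsum_bound)
  also have "\<dots> = (\<integral>\<^sup>+x. ennreal (norm (f x)) \<partial>count_space A)"
    using True by (intro ennreal_infsum_eq_nn_integral) auto
  finally show ?thesis .
next
  case False
  then show ?thesis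
    by (simp add: summable_on_iff_abs_summable_on_complex infsum_not_exists)
qed

lemma nn_integral_count_space_swap:
  fixes f :: "'a \<Rightarrow> 'b \<Rightarrow> ennreal"
  shows "(\<integral>\<^sup>+x. \<integral>\<^sup>+y. f x y \<partial>count_space UNIV \<partial>count_space UNIV)
       = (\<integral>\<^sup>+y. \<integral>\<^sup>+x. f x y \<partial>count_space UNIV \<partial>count_space UNIV)"
  using nn_integral_fst_count_space[of "case_prod f"] nn_integral_snd_count_space[of "case_prod f"]
  by simp

lemma nn_integral_weighted_Cauchy_Schwarz:
  assumes [measurable]: "k \<in> borel_measurable M" "v \<in> borel_measurable M"
  shows "(\<integral>\<^sup>+x. k x * v x \<partial>M)\<^sup>2 \<le> (\<integral>\<^sup>+x. k x \<partial>M) * (\<integral>\<^sup>+x. k x * (v x)\<^sup>2 \<partial>M)"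
proof -
  have "(\<integral>\<^sup>+x. 1 * v x \<partial>density M k)\<^sup>2
      \<le> (\<integral>\<^sup>+x. 1\<^sup>2 \<partial>density M k) * (\<integral>\<^sup>+x. (v x)\<^sup>2 \<partial>density M k)"
    by (rule Cauchy_Schwarz_nn_integral) auto
  then show ?thesis
    by (simp add: nn_integral_density emeasure_density cong: nn_integral_cong)
qed

definition nn_square_sum :: "('a \<Rightarrow> ennreal) \<Rightarrow> ennreal" where
  "nn_square_sum u = (\<integral>\<^sup>+x. (u x)\<^sup>2 \<partial>count_space UNIV)"

lemma Schur_test:
  fixes k :: "'a \<Rightarrow> 'b \<Rightarrow> ennreal"
  assumes dominated: "\<And>x. u x \<le> (\<integral>\<^sup>+y. k x y * v y \<partial>count_space UNIV)"
    and rows: "\<And>x. (\<integral>\<^sup>+y. k x y \<partial>count_space UNIV) \<le> A"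
    and columns: "\<And>y. (\<integral>\<^sup>+x. k x y \<partial>count_space UNIV) \<le> B"
  shows "nn_square_sum u \<le> A * B * nn_square_sum v"
proof -
  have "nn_square_sum u \<le> (\<integral>\<^sup>+x. A * (\<integral>\<^sup>+y. k x y * (v y)\<^sup>2 \<partial>count_space UNIV) \<partial>count_space UNIV)"
    unfolding nn_square_sum_def
  proof (intro nn_integral_mono)
    fix x
    have "(u x)\<^sup>2 \<le> (\<integral>\<^sup>+y. k x y * v y \<partial>count_space UNIV)\<^sup>2"
      by (intro power_mono dominated) auto
    also have "\<dots> \<le> (\<integral>\<^sup>+y. k x y \<partial>count_space UNIV) * (\<integral>\<^sup>+y. k x y * (v y)\<^sup>2 \<partial>count_space UNIV)"
      by (rule nn_integral_weighted_Cauchy_Schwarz) auto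
    also have "\<dots> \<le> A * (\<integral>\<^sup>+y. k x y * (v y)\<^sup>2 \<partial>count_space UNIV)"
      by (intro mult_right_mono rows) auto
    finally show "(u x)\<^sup>2 \<le> A * (\<integral>\<^sup>+y. k x y * (v y)\<^sup>2 \<partial>count_space UNIV)" .
  qed
  also have "\<dots> = A * (\<integral>\<^sup>+y. (\<integral>\<^sup>+x. k x y \<partial>count_space UNIV) * (v y)\<^sup>2 \<partial>count_space UNIV)"
    by (simp add: nn_integral_cmult nn_integral_count_space_swap[of "\<lambda>x y. k x y * (v y)\<^sup>2"]
        nn_integral_multc)
  also have "\<dots> \<le> A * (\<integral>\<^sup>+y. B * (v y)\<^sup>2 \<partial>count_space UNIV)"
    by (intro mult_left_mono nn_integral_mono mult_right_mono columns) auto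
  also have "\<dots> = A * B * nn_square_sum v"
    by (simp add: nn_square_sum_def nn_integral_cmult mult_ac)
  finally show ?thesis .
qed

lemma nn_integral_count_space_int_split:
  fixes f :: "int \<Rightarrow> ennreal"
  shows "(\<integral>\<^sup>+k. f k \<partial>count_space UNIV) = (\<Sum>n. f (int n)) + (\<Sum>n. f (- int n - 1))"
proof -
  have "(\<integral>\<^sup>+k. f k \<partial>count_space UNIV)
      = (\<integral>\<^sup>+k. f k * indicator {0..} k + f k * indicator {..<0} k \<partial>count_space UNIV)"
    by (intro nn_integral_cong) (auto simp: indicator_def)
  also have "\<dots> = (\<integral>\<^sup>+k. f k \<partial>count_space {0..}) + (\<integral>\<^sup>+k. f k \<partial>count_space {..<0})"
    by (simp add: nn_integral_add nn_integral_count_space_indicator)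
  also have "(\<integral>\<^sup>+k. f k \<partial>count_space {0..}) = (\<integral>\<^sup>+n. f (int n) \<partial>count_space UNIV)"
    by (rule nn_integral_bij_count_space[symmetric]) (rule bij_betwI[where g=nat], auto)
  also have "(\<integral>\<^sup>+k. f k \<partial>count_space {..<0}) = (\<integral>\<^sup>+n. f (- int n - 1) \<partial>count_space UNIV)"
    by (rule nn_integral_bij_count_space[symmetric])
       (rule bij_betwI[where g="\<lambda>k. nat (- k - 1)"], auto)
  finally show ?thesis
    by (simp add: nn_integral_count_space_nat)
qed

lemma nn_integral_nat_abs_finite:
  fixes a :: "nat \<Rightarrow> real"
  assumes "\<And>n. a n \<ge> 0" and "summable a"
  shows "(\<integral>\<^sup>+k. ennreal (a (nat \<bar>k\<bar>)) \<partial>count_space UNIV) \<noteq> \<infinity>"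
proof -
  have "summable (\<lambda>n. a (Suc n))"
    using assms(2) by (simp add: summable_Suc_iff)
  moreover have "nat \<bar>- int n - 1\<bar> = Suc n" for n
    by simp
  ultimately show ?thesis
    unfolding nn_integral_count_space_int_split using assms
    by (simp add: suminf_ennreal2)
qed

section \<open>The decay kernel\<close>

definition decay_weight :: "real \<Rightarrow> real \<Rightarrow> int \<Rightarrow> real" where
  "decay_weight \<theta> z k = exp (\<theta> * \<bar>real_of_int k\<bar>) * bessel_majorant z k"

definition decay_kernel :: "real \<Rightarrow> real \<Rightarrow> ('n::finite \<Rightarrow> int) \<Rightarrow> real" where
  "decay_kernel \<theta> z d = (\<Prod>i\<in>UNIV. decay_weight \<theta> z (d i))"

definition kernel_mass :: "real \<Rightarrow> real \<Rightarrow> real" where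
  "kernel_mass \<theta> z = (\<Sum>\<^sub>\<infinity>k. decay_weight \<theta> z k)"

lemma decay_weight_nonneg: "decay_weight \<theta> z k \<ge> 0"
  unfolding decay_weight_def using bessel_majorant_nonneg by simp

lemma decay_kernel_nonneg: "decay_kernel \<theta> z d \<ge> 0"
  unfolding decay_kernel_def by (simp add: decay_weight_nonneg prod_nonneg)

lemma kernel_mass_nonneg: "kernel_mass \<theta> z \<ge> 0"
  unfolding kernel_mass_def by (simp add: decay_weight_nonneg infsum_nonneg)

lemma decay_kernel_commute:
  "decay_kernel \<theta> z (\<lambda>i. x i - y i) = decay_kernel \<theta> z (\<lambda>i. y i - x i)"
  unfolding decay_kernel_def decay_weight_def bessel_majorant_def by (simp add: abs_minus_commute)

lemma decay_kernel_mono: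
  assumes "0 \<le> \<theta>" "\<theta> \<le> \<theta>'"
  shows "decay_kernel \<theta> z d \<le> decay_kernel \<theta>' z d"
  unfolding decay_kernel_def decay_weight_def using assms
  by (intro prod_mono) (auto intro!: mult_right_mono mult_nonneg_nonneg bessel_majorant_nonneg)

lemma decay_kernel_add:
  "decay_kernel (\<theta> + \<theta>') z d = exp (\<theta>' * (\<Sum>i\<in>UNIV. \<bar>real_of_int (d i)\<bar>)) * decay_kernel \<theta> z d"
  unfolding decay_kernel_def decay_weight_def
  by (simp add: distrib_right exp_add prod.distrib exp_sum sum_distrib_left mult_ac)

lemma norm_stark_le_decay_kernel:
  assumes "0 \<le> \<theta>"
  shows "norm (stark g h m x) \<le> decay_kernel \<theta> (g / h) (\<lambda>i. m i - x i)"
proof -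
  have "norm (stark g h m x) = (\<Prod>i\<in>UNIV. \<bar>besselJ (m i - x i) (g / h)\<bar>)"
    unfolding stark_def norm_of_real by (rule abs_prod)
  also have "\<dots> \<le> decay_kernel 0 (g / h) (\<lambda>i. m i - x i)"
    unfolding decay_kernel_def decay_weight_def
    by (intro prod_mono) (simp add: abs_besselJ_le)
  also have "\<dots> \<le> decay_kernel \<theta> (g / h) (\<lambda>i. m i - x i)"
    using assms by (rule decay_kernel_mono[OF order_refl])
  finally show ?thesis .
qed

lemma decay_weight_summable: "decay_weight \<theta> z summable_on UNIV"
proof (rule summable_on_if_nn_integral_finite[OF decay_weight_nonneg])
  define a where "a n = exp (z\<^sup>2 / 4) * ((exp \<theta> * (\<bar>z\<bar> / 2)) ^ n / fact n)" for n
  have "decay_weight \<theta> z k = a (nat \<bar>k\<bar>)" for k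
  proof -
    have "exp (\<theta> * \<bar>real_of_int k\<bar>) = exp \<theta> ^ nat \<bar>k\<bar>"
      by (simp add: exp_of_nat_mult[symmetric] mult.commute)
    then show ?thesis
      by (simp add: decay_weight_def bessel_majorant_def a_def power_mult_distrib power_divide)
  qed
  moreover have "summable a"
    unfolding a_def by (intro summable_mult sums_summable[OF exp_sums])
  ultimately show "(\<integral>\<^sup>+k. ennreal (decay_weight \<theta> z k) \<partial>count_space UNIV) \<noteq> \<infinity>"
    using nn_integral_nat_abs_finite[of a] by (simp add: a_def)
qed

lemma nn_integral_decay_kernel:
  "(\<integral>\<^sup>+d. ennreal (decay_kernel \<theta> z (d :: 'n::finite \<Rightarrow> int)) \<partial>count_space UNIV)
     = ennreal (kernel_mass \<theta> z ^ CARD('n))"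
proof -
  have weight_abs_summable: "(\<lambda>k. norm (decay_weight \<theta> z k)) summable_on UNIV"
    using decay_weight_summable decay_weight_nonneg by simp
  have "Infinite_Set_Sum.abs_summable_on (decay_weight \<theta> z) UNIV"
    using weight_abs_summable abs_summable_equivalent by blast
  then have "Infinite_Set_Sum.abs_summable_on (\<lambda>d. \<Prod>i\<in>UNIV. decay_weight \<theta> z (d i))
      (PiE (UNIV::'n set) (\<lambda>_. UNIV))"
    by (intro abs_summable_on_prod_PiE) auto
  then have "Infinite_Set_Sum.abs_summable_on (decay_kernel \<theta> z) (UNIV :: ('n \<Rightarrow> int) set)"
    by (simp add: decay_kernel_def[abs_def])
  then have "(\<lambda>d. norm (decay_kernel \<theta> z d)) summable_on (UNIV :: ('n \<Rightarrow> int) set)"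
    using abs_summable_equivalent by blast
  then have summable: "(decay_kernel \<theta> z :: ('n \<Rightarrow> int) \<Rightarrow> real) summable_on UNIV"
    by (rule abs_summable_summable)
  have "infsum (\<lambda>d. \<Prod>i\<in>UNIV. decay_weight \<theta> z (d i)) (PiE (UNIV::'n set) (\<lambda>_. UNIV))
      = (\<Prod>i\<in>(UNIV::'n set). kernel_mass \<theta> z)"
    unfolding kernel_mass_def using weight_abs_summable by (intro infsum_prod_PiE_abs) auto
  then have "infsum (decay_kernel \<theta> z :: ('n \<Rightarrow> int) \<Rightarrow> real) UNIV = kernel_mass \<theta> z ^ CARD('n)"
    by (simp add: decay_kernel_def[abs_def])
  then show ?thesis
    using ennreal_infsum_eq_nn_integral[OF decay_kernel_nonneg summable] by simp
qed

lemma nn_integral_decay_kernel_translate: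
  fixes x :: "'n::finite \<Rightarrow> int"
  shows "(\<integral>\<^sup>+y. ennreal (decay_kernel \<theta> z (\<lambda>i. x i - y i)) \<partial>count_space UNIV)
           = ennreal (kernel_mass \<theta> z ^ CARD('n))"
    and "(\<integral>\<^sup>+y. ennreal (decay_kernel \<theta> z (\<lambda>i. y i - x i)) \<partial>count_space UNIV)
           = ennreal (kernel_mass \<theta> z ^ CARD('n))"
proof -
  have "bij_betw (\<lambda>y i. x i - y i) UNIV UNIV" "bij_betw (\<lambda>y i. y i - x i) UNIV UNIV"
    by (auto intro: bij_betwI[where g="\<lambda>y i. x i - y i"] bij_betwI[where g="\<lambda>y i. y i + x i"])
  then show "(\<integral>\<^sup>+y. ennreal (decay_kernel \<theta> z (\<lambda>i. x i - y i)) \<partial>count_space UNIV)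
           = ennreal (kernel_mass \<theta> z ^ CARD('n))"
    and "(\<integral>\<^sup>+y. ennreal (decay_kernel \<theta> z (\<lambda>i. y i - x i)) \<partial>count_space UNIV)
           = ennreal (kernel_mass \<theta> z ^ CARD('n))"
    using nn_integral_bij_count_space[of _ UNIV UNIV "\<lambda>d. ennreal (decay_kernel \<theta> z d)"]
    by (simp_all add: nn_integral_decay_kernel)
qed

lemma Schur_test_decay_kernel:
  fixes u v :: "('n::finite \<Rightarrow> int) \<Rightarrow> ennreal"
  assumes "\<And>x. u x \<le> (\<integral>\<^sup>+y. ennreal (decay_kernel \<theta> z (\<lambda>i. x i - y i)) * v y \<partial>count_space UNIV)"
  shows "nn_square_sum u \<le> ennreal (kernel_mass \<theta> z ^ CARD('n)) ^ 2 * nn_square_sum v"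
proof -
  have "nn_square_sum u \<le> ennreal (kernel_mass \<theta> z ^ CARD('n)) * ennreal (kernel_mass \<theta> z ^ CARD('n))
      * nn_square_sum v"
    by (rule Schur_test[OF assms]) (simp_all add: nn_integral_decay_kernel_translate)
  then show ?thesis
    by (simp add: power2_eq_square)
qed

section \<open>Estimates in the Stark basis\<close>

lemma abs_msum_diff_le: "\<bar>real_of_int (msum m - msum x)\<bar> \<le> (\<Sum>i\<in>UNIV. \<bar>real_of_int (m i - x i)\<bar>)"
  unfolding msum_def by (simp add: sum_subtractf[symmetric] del: of_int_diff)

lemma norm_stark_weighted_le:
  assumes "0 \<le> \<theta>" and "0 \<le> r" and "0 \<le> s"
    and "r \<le> exp (\<theta> * \<bar>real_of_int (msum m - msum x)\<bar>) * s"
  shows "r * norm (stark g h m x) \<le> decay_kernel (2 * \<theta>) (g / h) (\<lambda>i. m i - x i) * s"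
proof -
  let ?d = "\<lambda>i. m i - x i"
  have "r * norm (stark g h m x) \<le> exp (\<theta> * \<bar>real_of_int (msum m - msum x)\<bar>) * s * decay_kernel \<theta> (g / h) ?d"
    using assms by (intro mult_mono norm_stark_le_decay_kernel) (auto simp: decay_kernel_nonneg)
  also have "\<dots> \<le> exp (\<theta> * (\<Sum>i\<in>UNIV. \<bar>real_of_int (?d i)\<bar>)) * s * decay_kernel \<theta> (g / h) ?d"
    using assms abs_msum_diff_le[of m x]
    by (intro mult_right_mono decay_kernel_nonneg) (auto intro: mult_left_mono)
  also have "\<dots> = decay_kernel (2 * \<theta>) (g / h) ?d * s"
    using decay_kernel_add[of \<theta> \<theta> "g / h" ?d] by (simp add: mult_2 mult_ac)
  finally show ?thesis .
qed

lemma stark_coeff_weighted_le: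
  fixes \<rho> \<sigma> :: "int \<Rightarrow> real"
  assumes "0 \<le> \<theta>" and "\<And>a. 0 \<le> \<rho> a" and "\<And>a. 0 \<le> \<sigma> a"
    and transfer: "\<And>a b. \<rho> a \<le> exp (\<theta> * \<bar>real_of_int (a - b)\<bar>) * \<sigma> b"
  shows "ennreal (\<rho> (msum m) * norm (stark_coeff g h m f))
    \<le> (\<integral>\<^sup>+y. ennreal (decay_kernel (2 * \<theta>) (g / h) (\<lambda>i. m i - y i)) * ennreal (\<sigma> (msum y) * norm (f y))
          \<partial>count_space UNIV)"
proof -
  have "ennreal (\<rho> (msum m) * norm (stark_coeff g h m f))
      \<le> ennreal (\<rho> (msum m)) * (\<integral>\<^sup>+y. ennreal (norm (cnj (stark g h m y) * f y)) \<partial>count_space UNIV)"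
    unfolding stark_coeff_def ennreal_mult'[OF assms(2)]
    by (intro mult_left_mono norm_infsum_le_nn_integral) auto
  also have "\<dots> = (\<integral>\<^sup>+y. ennreal (\<rho> (msum m) * norm (stark g h m y) * norm (f y)) \<partial>count_space UNIV)"
    using assms(2) by (simp add: nn_integral_cmult[symmetric] ennreal_mult'[symmetric] norm_mult mult.assoc)
  also have "\<dots> \<le> (\<integral>\<^sup>+y. ennreal (decay_kernel (2 * \<theta>) (g / h) (\<lambda>i. m i - y i) * \<sigma> (msum y) * norm (f y))
      \<partial>count_space UNIV)"
    using assms by (intro nn_integral_mono ennreal_leI mult_right_mono norm_stark_weighted_le) auto
  finally show ?thesis
    by (simp add: ennreal_mult' decay_kernel_nonneg mult.assoc)
qed

lemma norm_Wop_le_nn_integral: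
  "ennreal (norm (Wop g h w f x))
     \<le> (\<integral>\<^sup>+m. ennreal (\<bar>w (msum m)\<bar> * norm (stark_coeff g h m f * stark g h m x)) \<partial>count_space UNIV)"
proof -
  define T where "T m = ennreal (norm (stark_coeff g h m f * stark g h m x))" for m
  have "ennreal (norm (Wop g h w f x))
      \<le> (\<integral>\<^sup>+a. ennreal (\<bar>w a\<bar>) * ennreal (norm (Pa g h a f x)) \<partial>count_space UNIV)"
    unfolding Wop_def by (rule order_trans[OF norm_infsum_le_nn_integral]) (simp add: norm_mult ennreal_mult)
  also have "\<dots> \<le> (\<integral>\<^sup>+a. ennreal (\<bar>w a\<bar>) * (\<integral>\<^sup>+m. T m * indicator {m. msum m = a} m \<partial>count_space UNIV)
      \<partial>count_space UNIV)"
    unfolding Pa_def T_def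
    by (intro nn_integral_mono mult_left_mono)
       (auto simp: nn_integral_count_space_indicator[symmetric] norm_infsum_le_nn_integral)
  also have "\<dots> = (\<integral>\<^sup>+m. \<integral>\<^sup>+a. ennreal (\<bar>w a\<bar>) * (T m * indicator {m. msum m = a} m)
      \<partial>count_space UNIV \<partial>count_space UNIV)"
    by (simp add: nn_integral_cmult nn_integral_count_space_swap)
  also have "\<dots> = (\<integral>\<^sup>+m. ennreal (\<bar>w (msum m)\<bar>) * T m \<partial>count_space UNIV)"
  proof (intro nn_integral_cong)
    fix m :: "'a \<Rightarrow> int"
    show "(\<integral>\<^sup>+a. ennreal (\<bar>w a\<bar>) * (T m * indicator {m. msum m = a} m) \<partial>count_space UNIV)
        = ennreal (\<bar>w (msum m)\<bar>) * T m"
      by (subst nn_integral_count_space'[where A="{msum m}"]) (auto simp: indicator_def)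
  qed
  finally show ?thesis
    by (simp add: T_def ennreal_mult)
qed

lemma Wop_weighted_le:
  fixes \<omega> \<rho> w :: "int \<Rightarrow> real"
  assumes "0 \<le> \<theta>" and "\<And>a. 0 \<le> \<omega> a" and "\<And>a. 0 \<le> \<rho> a"
    and transfer: "\<And>a b. \<omega> a * \<bar>w b\<bar> \<le> exp (\<theta> * \<bar>real_of_int (a - b)\<bar>) * \<rho> b"
  shows "ennreal (\<omega> (msum x) * norm (Wop g h w f x))
    \<le> (\<integral>\<^sup>+m. ennreal (decay_kernel (2 * \<theta>) (g / h) (\<lambda>i. x i - m i))
                * ennreal (\<rho> (msum m) * norm (stark_coeff g h m f)) \<partial>count_space UNIV)"
proof -
  have "ennreal (\<omega> (msum x) * norm (Wop g h w f x))
      \<le> ennreal (\<omega> (msum x)) * (\<integral>\<^sup>+m. ennreal (\<bar>w (msum m)\<bar> * norm (stark_coeff g h m f * stark g h m x))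
          \<partial>count_space UNIV)"
    unfolding ennreal_mult'[OF assms(2)] by (intro mult_left_mono norm_Wop_le_nn_integral) auto
  also have "\<dots> = (\<integral>\<^sup>+m. ennreal ((\<omega> (msum x) * \<bar>w (msum m)\<bar>) * norm (stark g h m x) * norm (stark_coeff g h m f))
      \<partial>count_space UNIV)"
    using assms(2) by (simp add: nn_integral_cmult[symmetric] ennreal_mult'[symmetric] norm_mult mult_ac)
  also have "\<dots> \<le> (\<integral>\<^sup>+m. ennreal (decay_kernel (2 * \<theta>) (g / h) (\<lambda>i. m i - x i) * \<rho> (msum m)
      * norm (stark_coeff g h m f)) \<partial>count_space UNIV)"
  proof (intro nn_integral_mono ennreal_leI mult_right_mono norm_stark_weighted_le)
    fix m :: "'a \<Rightarrow> int"
    show "\<omega> (msum x) * \<bar>w (msum m)\<bar> \<le> exp (\<theta> * \<bar>real_of_int (msum m - msum x)\<bar>) * \<rho> (msum m)"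
      using transfer[of "msum x" "msum m"] by (simp add: abs_minus_commute)
  qed (use assms in auto)
  finally show ?thesis
    by (simp add: ennreal_mult' decay_kernel_nonneg decay_kernel_commute[of _ _ x] mult.assoc)
qed

lemma nn_square_sum_le_scaled:
  assumes "\<And>x. u x \<le> c * v x"
  shows "nn_square_sum u \<le> c\<^sup>2 * nn_square_sum v"
proof -
  have "nn_square_sum u \<le> (\<integral>\<^sup>+x. c\<^sup>2 * (v x)\<^sup>2 \<partial>count_space UNIV)"
    unfolding nn_square_sum_def using assms
    by (intro nn_integral_mono) (auto simp: power_mult_distrib[symmetric] intro: power_mono)
  then show ?thesis
    by (simp add: nn_square_sum_def nn_integral_cmult)
qed

lemma l2_if_nn_square_sum_finite:
  assumes "nn_square_sum (\<lambda>x. ennreal (norm (\<psi> x))) \<noteq> \<infinity>"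
  shows "l2 \<psi>" and "ennreal ((l2norm \<psi>)\<^sup>2) = nn_square_sum (\<lambda>x. ennreal (norm (\<psi> x)))"
proof -
  have eq: "nn_square_sum (\<lambda>x. ennreal (norm (\<psi> x))) = (\<integral>\<^sup>+x. ennreal ((norm (\<psi> x))\<^sup>2) \<partial>count_space UNIV)"
    by (simp add: nn_square_sum_def ennreal_power)
  have summable: "(\<lambda>x. (norm (\<psi> x))\<^sup>2) summable_on UNIV"
    using assms eq by (intro summable_on_if_nn_integral_finite) auto
  then show "l2 \<psi>"
    by (simp add: l2_def)
  show "ennreal ((l2norm \<psi>)\<^sup>2) = nn_square_sum (\<lambda>x. ennreal (norm (\<psi> x)))"
    using ennreal_infsum_eq_nn_integral[OF _ summable] eq by (simp add: l2norm_def infsum_nonneg)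
qed

lemma l2norm_le_if_nn_square_sum_le:
  assumes le: "nn_square_sum (\<lambda>x. ennreal (norm (\<phi> x))) \<le> ennreal C ^ 2 * nn_square_sum (\<lambda>x. ennreal (norm (\<psi> x)))"
    and finite: "nn_square_sum (\<lambda>x. ennreal (norm (\<psi> x))) \<noteq> \<infinity>" and "0 \<le> C"
  shows "l2 \<phi> \<and> l2norm \<phi> \<le> C * l2norm \<psi>"
proof -
  have "ennreal C ^ 2 * nn_square_sum (\<lambda>x. ennreal (norm (\<psi> x))) < \<infinity>"
    using finite \<open>0 \<le> C\<close> by (simp add: ennreal_power ennreal_mult_less_top top.not_eq_extremum)
  then have finite_\<phi>: "nn_square_sum (\<lambda>x. ennreal (norm (\<phi> x))) \<noteq> \<infinity>"
    using le by auto
  have "ennreal ((l2norm \<phi>)\<^sup>2) \<le> ennreal ((C * l2norm \<psi>)\<^sup>2)"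
    using le \<open>0 \<le> C\<close> unfolding l2_if_nn_square_sum_finite(2)[OF finite_\<phi>, symmetric]
      l2_if_nn_square_sum_finite(2)[OF finite, symmetric]
    by (simp add: power_mult_distrib ennreal_mult ennreal_power)
  then have "(l2norm \<phi>)\<^sup>2 \<le> (C * l2norm \<psi>)\<^sup>2"
    by simp
  moreover have "0 \<le> C * l2norm \<psi>"
    using \<open>0 \<le> C\<close> by (auto simp: l2norm_def intro!: mult_nonneg_nonneg infsum_nonneg)
  ultimately show ?thesis
    using l2_if_nn_square_sum_finite(1)[OF finite_\<phi>] power2_le_imp_le by blast
qed

lemma nn_square_sum_stark_combination_finite:
  assumes "finite F"
  shows "nn_square_sum (\<lambda>x. ennreal (norm (\<Sum>m\<in>F. c m * stark g h m (x :: 'n::finite \<Rightarrow> int)))) \<noteq> \<infinity>"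
proof -
  define c' where "c' m = ennreal (if m \<in> F then norm (c m) else 0)" for m :: "'n \<Rightarrow> int"
  have "ennreal (norm (\<Sum>m\<in>F. c m * stark g h m x))
      \<le> (\<integral>\<^sup>+m. ennreal (decay_kernel 0 (g / h) (\<lambda>i. x i - m i)) * c' m \<partial>count_space UNIV)" for x
  proof -
    have "norm (\<Sum>m\<in>F. c m * stark g h m x) \<le> (\<Sum>m\<in>F. decay_kernel 0 (g / h) (\<lambda>i. x i - m i) * norm (c m))"
      by (rule order_trans[OF norm_sum], rule sum_mono)
         (simp add: norm_mult decay_kernel_commute[of _ _ x] norm_stark_le_decay_kernel mult.commute
           mult_left_mono)
    then have "ennreal (norm (\<Sum>m\<in>F. c m * stark g h m x))
        \<le> ennreal (\<Sum>m\<in>F. decay_kernel 0 (g / h) (\<lambda>i. x i - m i) * norm (c m))"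
      by (rule ennreal_leI)
    also have "\<dots> = (\<Sum>m\<in>F. ennreal (decay_kernel 0 (g / h) (\<lambda>i. x i - m i)) * c' m)"
      by (subst sum_ennreal[symmetric])
         (auto simp: c'_def decay_kernel_nonneg ennreal_mult intro!: sum.cong)
    also have "\<dots> = (\<integral>\<^sup>+m. ennreal (decay_kernel 0 (g / h) (\<lambda>i. x i - m i)) * c' m \<partial>count_space UNIV)"
      using assms by (intro nn_integral_count_space'[symmetric]) (auto simp: c'_def)
    finally show ?thesis .
  qed
  then have "nn_square_sum (\<lambda>x. ennreal (norm (\<Sum>m\<in>F. c m * stark g h m x)))
      \<le> ennreal (kernel_mass 0 (g / h) ^ CARD('n)) ^ 2 * nn_square_sum c'"
    by (rule Schur_test_decay_kernel)
  also have "nn_square_sum c' = (\<Sum>m\<in>F. (c' m)\<^sup>2)"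
    unfolding nn_square_sum_def using assms by (intro nn_integral_count_space') (auto simp: c'_def)
  also have "ennreal (kernel_mass 0 (g / h) ^ CARD('n)) ^ 2 * (\<Sum>m\<in>F. (c' m)\<^sup>2)
      = ennreal ((kernel_mass 0 (g / h) ^ CARD('n))\<^sup>2 * (\<Sum>m\<in>F. (norm (c m))\<^sup>2))"
    by (simp add: c'_def ennreal_power ennreal_mult' kernel_mass_nonneg)
  finally show ?thesis
    using neq_top_trans[OF ennreal_neq_top] by simp
qed

section \<open>The conjugated potential\<close>

lemma exp_weight_transfer:
  fixes a b l :: real
  assumes "0 \<le> \<theta>"
  shows "exp (- \<theta> * \<bar>a - l\<bar>) * exp (\<theta> * \<bar>b - l\<bar>) \<le> exp (\<theta> * \<bar>a - b\<bar>)"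
proof -
  have "\<theta> * \<bar>b - l\<bar> \<le> \<theta> * (\<bar>a - b\<bar> + \<bar>a - l\<bar>)"
    using assms by (intro mult_left_mono) auto
  then show ?thesis
    by (simp add: exp_add[symmetric] algebra_simps)
qed

lemma conjugated_multiplication_bound:
  fixes \<psi> :: "('n::finite \<Rightarrow> int) \<Rightarrow> complex" and V :: "('n \<Rightarrow> int) \<Rightarrow> real" and \<theta> lam g h M :: real
  assumes "0 \<le> \<theta>" and V_bound: "\<And>x. \<bar>V x\<bar> \<le> M"
  defines "wp \<equiv> \<lambda>a. exp (\<theta> * \<bar>real_of_int a - lam\<bar>)"
    and "wm \<equiv> \<lambda>a. exp (- \<theta> * \<bar>real_of_int a - lam\<bar>)"
    and "K \<equiv> kernel_mass (2 * \<theta>) (g / h) ^ CARD('n)"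
  shows "nn_square_sum (\<lambda>x. ennreal (norm (Wop g h wm (\<lambda>y. complex_of_real (V y) * Wop g h wp \<psi> y) x)))
    \<le> ennreal (M * K ^ 4) ^ 2 * nn_square_sum (\<lambda>x. ennreal (norm (\<psi> x)))"
proof -
  (* The intermediate functions carry the weight of W^-1, so that weights only meet as ratios. *)
  define f where "f y = complex_of_real (V y) * Wop g h wp \<psi> y" for y
  have "0 \<le> M"
    using V_bound[of undefined] by simp
  have "0 \<le> K"
    unfolding K_def by (simp add: kernel_mass_nonneg)
  have wm_pos: "0 \<le> wm a" and wm_wp: "wm a * \<bar>wp b\<bar> \<le> exp (\<theta> * \<bar>real_of_int (a - b)\<bar>)" for a b
    unfolding wm_def wp_def using exp_weight_transfer[OF \<open>0 \<le> \<theta>\<close>] by auto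
  have wm_wm: "wm a \<le> exp (\<theta> * \<bar>real_of_int (a - b)\<bar>) * wm b" for a b
  proof -
    have "wm a = wm a * \<bar>wp b\<bar> * wm b"
      by (simp add: wm_def wp_def exp_add[symmetric])
    then show ?thesis
      using wm_wp[of a b] by (metis mult_right_mono wm_pos)
  qed
  have wm_le: "wm b \<le> exp (\<theta> * \<bar>real_of_int (a - b)\<bar>) * wm b" for a b
    using mult_right_mono[of 1 "exp (\<theta> * \<bar>real_of_int (a - b)\<bar>)" "wm b"] wm_pos \<open>0 \<le> \<theta>\<close> by simp
  have coeff_\<psi>: "nn_square_sum (\<lambda>m. ennreal (norm (stark_coeff g h m \<psi>)))
      \<le> ennreal K ^ 2 * nn_square_sum (\<lambda>y. ennreal (norm (\<psi> y)))"
    unfolding K_def using stark_coeff_weighted_le[OF \<open>0 \<le> \<theta>\<close>, where \<rho>="\<lambda>_. 1" and \<sigma>="\<lambda>_. 1"] \<open>0 \<le> \<theta>\<close>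
    by (intro Schur_test_decay_kernel) (simp add: zero_le_mult_iff)
  have W\<psi>: "nn_square_sum (\<lambda>y. ennreal (wm (msum y) * norm (Wop g h wp \<psi> y)))
      \<le> ennreal K ^ 2 * nn_square_sum (\<lambda>m. ennreal (norm (stark_coeff g h m \<psi>)))"
    unfolding K_def using Wop_weighted_le[OF \<open>0 \<le> \<theta>\<close>, where \<omega>=wm and \<rho>="\<lambda>_. 1" and w=wp] wm_pos wm_wp
    by (intro Schur_test_decay_kernel) (simp del: of_int_diff)
  have Vf: "nn_square_sum (\<lambda>y. ennreal (wm (msum y) * norm (f y)))
      \<le> ennreal M ^ 2 * nn_square_sum (\<lambda>y. ennreal (wm (msum y) * norm (Wop g h wp \<psi> y)))"
    using V_bound wm_pos \<open>0 \<le> M\<close>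
    by (intro nn_square_sum_le_scaled)
       (auto simp: f_def norm_mult ennreal_mult[symmetric] mult_left_mono mult_right_mono mult.left_commute)
  have coeff_f: "nn_square_sum (\<lambda>m. ennreal (wm (msum m) * norm (stark_coeff g h m f)))
      \<le> ennreal K ^ 2 * nn_square_sum (\<lambda>y. ennreal (wm (msum y) * norm (f y)))"
    unfolding K_def using stark_coeff_weighted_le[OF \<open>0 \<le> \<theta>\<close>, where \<rho>=wm and \<sigma>=wm] wm_pos wm_wm
    by (intro Schur_test_decay_kernel) (simp del: of_int_diff)
  have \<phi>: "nn_square_sum (\<lambda>x. ennreal (norm (Wop g h wm f x)))
      \<le> ennreal K ^ 2 * nn_square_sum (\<lambda>m. ennreal (wm (msum m) * norm (stark_coeff g h m f)))"
    unfolding K_def using Wop_weighted_le[OF \<open>0 \<le> \<theta>\<close>, where \<omega>="\<lambda>_. 1" and \<rho>=wm and w=wm] wm_pos wm_le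
    by (intro Schur_test_decay_kernel) (simp del: of_int_diff)
  have "nn_square_sum (\<lambda>x. ennreal (norm (Wop g h wm f x)))
      \<le> ennreal K ^ 2 * (ennreal K ^ 2 * (ennreal M ^ 2 * (ennreal K ^ 2 * (ennreal K ^ 2
          * nn_square_sum (\<lambda>x. ennreal (norm (\<psi> x)))))))"
    by (rule order_trans[OF \<phi> mult_left_mono[OF order_trans[OF coeff_f mult_left_mono[OF order_trans[OF Vf
          mult_left_mono[OF order_trans[OF W\<psi> mult_left_mono[OF coeff_\<psi>]]]]]]]]) simp_all
  also have "\<dots> = ennreal (M * K ^ 4) ^ 2 * nn_square_sum (\<lambda>x. ennreal (norm (\<psi> x)))"
    using \<open>0 \<le> M\<close> \<open>0 \<le> K\<close>
    by (simp add: ennreal_mult ennreal_power[symmetric] power_mult_distrib mult_ac flip: power_mult power_add)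
  finally show ?thesis
    unfolding f_def .
qed

lemma abs_Pot_le:
  assumes "\<And>n. \<bar>v n\<bar> \<le> B"
  shows "\<bar>Pot v (x :: 'n::{finite,linorder} \<Rightarrow> int)\<bar> \<le> real (card {(i::'n, j). i < j}) * B"
proof -
  have "\<bar>Pot v x\<bar> \<le> (\<Sum>(i, j)\<in>{(i::'n, j). i < j}. \<bar>v (x i - x j)\<bar>)"
    unfolding Pot_def by (rule order_trans[OF sum_abs]) (simp add: case_prod_unfold)
  also have "\<dots> \<le> real (card {(i::'n, j). i < j}) * B"
    using sum_bounded_above[of "{(i::'n, j). i < j}" "\<lambda>(i, j). \<bar>v (x i - x j)\<bar>" B] assms
    by (auto simp: case_prod_unfold)
  finally show ?thesis .
qed

theorem mainTheorem8:
  fixes g h \<theta> :: real and v :: "int \<Rightarrow> real"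
  assumes "h \<noteq> 0" and "\<theta> \<ge> 0"
    and "bounded (range v)" and "(v \<longlongrightarrow> 0) at_top" and "(v \<longlongrightarrow> 0) at_bot"
  shows "\<exists>C::real. \<forall>(lam::real) (F :: ('n::{finite,linorder} \<Rightarrow> int) set) (c :: ('n \<Rightarrow> int) \<Rightarrow> complex).
           finite F \<longrightarrow>
           (let \<psi> = (\<lambda>x. \<Sum>m\<in>F. c m * stark g h m x);
                W\<psi> = Wop g h (\<lambda>a. exp (\<theta> * \<bar>real_of_int a - lam\<bar>)) \<psi>;
                \<phi> = Wop g h (\<lambda>a. exp (- \<theta> * \<bar>real_of_int a - lam\<bar>))
                       (\<lambda>x. complex_of_real (Pot v x) * W\<psi> x)
            in l2 \<phi> \<and> l2norm \<phi> \<le> C * l2norm \<psi>)"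
proof -
  (* For h = 0 the junk value g / 0 = 0 makes the Stark basis
     the position basis, and the estimate holds there as well. *)
  obtain B where B: "\<And>n. \<bar>v n\<bar> \<le> B"
    using \<open>bounded (range v)\<close> unfolding bounded_iff by auto
  define M where "M = real (card {(i::'n, j). i < j}) * B"
  have Pot_bound: "\<bar>Pot v x\<bar> \<le> M" for x :: "'n \<Rightarrow> int"
    unfolding M_def using B by (rule abs_Pot_le)
  then have "0 \<le> M"
    by (meson abs_ge_zero order_trans)
  define C where "C = M * (kernel_mass (2 * \<theta>) (g / h) ^ CARD('n)) ^ 4"
  have "0 \<le> C"
    unfolding C_def using \<open>0 \<le> M\<close> kernel_mass_nonneg by simp
  show ?thesis
  proof (intro exI allI impI)
    fix lam :: real and F :: "('n \<Rightarrow> int) set" and c :: "('n \<Rightarrow> int) \<Rightarrow> complex"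
    assume "finite F"
    show "let \<psi> = (\<lambda>x. \<Sum>m\<in>F. c m * stark g h m x);
                W\<psi> = Wop g h (\<lambda>a. exp (\<theta> * \<bar>real_of_int a - lam\<bar>)) \<psi>;
                \<phi> = Wop g h (\<lambda>a. exp (- \<theta> * \<bar>real_of_int a - lam\<bar>))
                       (\<lambda>x. complex_of_real (Pot v x) * W\<psi> x)
            in l2 \<phi> \<and> l2norm \<phi> \<le> C * l2norm \<psi>"
      unfolding Let_def
      by (rule l2norm_le_if_nn_square_sum_le[OF _ nn_square_sum_stark_combination_finite[OF \<open>finite F\<close>]
            \<open>0 \<le> C\<close>])
         (unfold C_def, rule conjugated_multiplication_bound[OF \<open>\<theta> \<ge> 0\<close> Pot_bound])
  qed
qed

end
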